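(* For integers $a_1,a_2\ge1$, \[ G(a_1,a_2,0)=G(a_1-1,a_2,0)+G(a_1,a_2-1,0)+(-1)^{a_1+a_2}. \]
   Context: For integers $a_1,a_2,s$ with $a=a_1+a_2$, $G(a_1,a_2,s)=\sum_m N_m$, the sum over integers $m$ such that $a_1-m,\ a_2-(s-m),\ m,\ s-m$ are all nonnegative (an empty sum is $0$), where $N_m$ is the number of permutations $\pi$ of $[a]$ that are decreasing within each of four consecutive blocks of positions of lengths $a_1-m,\ a_2-(s-m),\ m,\ s-m$ (in this order; arbitrary between blocks), and have no fixed point ($\pi_i=i$) in the first two blocks. (For $s=0$ this is the number of permutations of $[a]$ decreasing on positions $1,\dots,a_1$ and on positions $a_1+1,\dots,a$ with no fixed point.) *)

theory Defs
  imports "HOL-Combinatorics.Permutations"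
begin

definition decr_on :: "(nat \<Rightarrow> nat) \<Rightarrow> nat set \<Rightarrow> bool" where
  "decr_on p B = (\<forall>i\<in>B. \<forall>j\<in>B. i < j \<longrightarrow> p j < p i)"

definition Nblocks :: "nat \<Rightarrow> nat \<Rightarrow> nat \<Rightarrow> nat \<Rightarrow> nat" where
  "Nblocks l1 l2 l3 l4 = card {p. p permutes {1..l1+l2+l3+l4}
      \<and> decr_on p {1..l1}
      \<and> decr_on p {l1+1..l1+l2}
      \<and> decr_on p {l1+l2+1..l1+l2+l3}
      \<and> decr_on p {l1+l2+l3+1..l1+l2+l3+l4}
      \<and> (\<forall>i\<in>{1..l1+l2}. p i \<noteq> i)}"

definition G :: "int \<Rightarrow> int \<Rightarrow> int \<Rightarrow> int" where
  "G a1 a2 s = (\<Sum>m\<in>{m::int. 0 \<le> a1 - m \<and> 0 \<le> a2 - (s - m) \<and> 0 \<le> m \<and> 0 \<le> s - m}.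
      int (Nblocks (nat (a1 - m)) (nat (a2 - (s - m))) (nat m) (nat (s - m))))"

end

theory Submission
  imports Defs
begin

text \<open>A permutation that is decreasing on each of the two blocks {1..a1} and {a1+1..a1+a2}
  is determined by the image S of the first block: the i-th position of a block is sent to
  the i-th largest element of its image. Fixed-point freeness thus becomes a condition on the
  ranks of the elements of S and of its complement. Counting the sets S according to the
  number k of their elements lying in the second block factorises the count as
  the sum over k of psi(a1,k) psi(a2,k), where psi(n,k) counts the (n-k)-subsets U of
  {1..n} in which no element has top rank equal to itself. (The factor for the first block
  a priori counts subsets with ranks shifted by k, but it obeys the same recurrences and
  hence equals psi.) Splitting off the largest or the smallest element shows that psi
  obeys Pascal's rule psi(n+1,k+1) = psi(n,k) + psi(n,k+1), and psi(n,0) = [n even].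
  For any array obeying Pascal's rule such inner products of rows telescope, leaving the
  product of the differences psi(a1,0) - psi(a1-1,0) = (-1)^a1 and
  psi(a2,0) - psi(a2-1,0) = (-1)^a2.\<close>

definition top_rank :: "nat set \<Rightarrow> nat \<Rightarrow> nat" where
  "top_rank U v = card {u\<in>U. v \<le> u}"

lemma top_rank_le_card: "finite U \<Longrightarrow> top_rank U v \<le> card U"
  unfolding top_rank_def by (rule card_mono) auto

lemma top_rank_pos: "finite U \<Longrightarrow> v \<in> U \<Longrightarrow> 0 < top_rank U v"
  unfolding top_rank_def by (auto simp: card_gt_0_iff)

lemma top_rank_antimono: "finite U \<Longrightarrow> v \<le> w \<Longrightarrow> top_rank U w \<le> top_rank U v"
  unfolding top_rank_def by (rule card_mono) auto

lemma top_rank_strict_antimono: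
  assumes "finite U" "v \<in> U" "v < w"
  shows "top_rank U w < top_rank U v"
  unfolding top_rank_def
proof (rule psubset_card_mono)
  show "finite {u \<in> U. v \<le> u}" using assms by simp
  have "{u \<in> U. w \<le> u} \<subseteq> {u \<in> U. v \<le> u}" "v \<in> {u \<in> U. v \<le> u}"
    "v \<notin> {u \<in> U. w \<le> u}" using assms by auto
  then show "{u \<in> U. w \<le> u} \<subset> {u \<in> U. v \<le> u}" by blast
qed

lemma inj_on_top_rank: "finite U \<Longrightarrow> inj_on (top_rank U) U"
  by (rule inj_onI) (metis top_rank_strict_antimono less_irrefl linorder_neqE_nat)

lemma bij_betw_top_rank:
  assumes "finite U"
  shows "bij_betw (top_rank U) U {1..card U}"
proof -
  have "top_rank U ` U \<subseteq> {1..card U}"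
    using top_rank_pos[OF assms] top_rank_le_card[OF assms] by (auto simp: Suc_le_eq)
  moreover have "card (top_rank U ` U) = card U"
    using card_image[OF inj_on_top_rank[OF assms]] .
  ultimately have "top_rank U ` U = {1..card U}"
    by (intro card_subset_eq) auto
  then show ?thesis unfolding bij_betw_def using inj_on_top_rank[OF assms] by simp
qed

lemma top_rank_image_add: "top_rank ((\<lambda>v. v + b) ` U) (v + b) = top_rank U v"
proof -
  have "{u\<in>(\<lambda>v. v + b) ` U. v + b \<le> u} = (\<lambda>v. v + b) ` {u\<in>U. v \<le> u}" by auto
  then show ?thesis unfolding top_rank_def by (simp add: card_image inj_on_def)
qed

lemma top_rank_insert_greater:
  assumes "finite Y" "\<forall>y\<in>Y. y < x"
  shows "top_rank (insert x Y) x = 1" "v \<in> Y \<Longrightarrow> top_rank (insert x Y) v = Suc (top_rank Y v)"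
proof -
  have "{u\<in>insert x Y. x \<le> u} = {x}" using assms by auto
  then show "top_rank (insert x Y) x = 1" unfolding top_rank_def by simp
  assume v: "v \<in> Y"
  have "{u\<in>insert x Y. v \<le> u} = insert x {u\<in>Y. v \<le> u}" using assms v by auto
  moreover have "x \<notin> {u\<in>Y. v \<le> u}" using assms by auto
  ultimately show "top_rank (insert x Y) v = Suc (top_rank Y v)"
    unfolding top_rank_def using assms by simp
qed

lemma top_rank_insert_less:
  assumes "finite Y" "\<forall>y\<in>Y. x < y"
  shows "top_rank (insert x Y) x = Suc (card Y)" "v \<in> Y \<Longrightarrow> top_rank (insert x Y) v = top_rank Y v"
proof -
  have "{u\<in>insert x Y. x \<le> u} = insert x Y" "x \<notin> Y" using assms by auto
  then show "top_rank (insert x Y) x = Suc (card Y)" unfolding top_rank_def using assms by simp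
  assume v: "v \<in> Y"
  have "{u\<in>insert x Y. v \<le> u} = {u\<in>Y. v \<le> u}" using assms v by auto
  then show "top_rank (insert x Y) v = top_rank Y v" unfolding top_rank_def by simp
qed

text \<open>A block of positions {d+1..d+card U} mapped decreasingly onto U has no fixed point
  iff rank_avoiding d U. The offset d is an integer because shifting U down may make it
  negative.\<close>
definition rank_avoiding :: "int \<Rightarrow> nat set \<Rightarrow> bool" where
  "rank_avoiding d U \<longleftrightarrow> (\<forall>v\<in>U. d + int (top_rank U v) \<noteq> int v)"

definition num_avoiding :: "nat \<Rightarrow> nat \<Rightarrow> int \<Rightarrow> nat" where
  "num_avoiding n m d = card {U. U \<subseteq> {1..n} \<and> card U = m \<and> rank_avoiding d U}"

lemma rank_avoiding_image_add:
  "rank_avoiding d ((\<lambda>v. v + b) ` U) \<longleftrightarrow> rank_avoiding (d - int b) U"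
  unfolding rank_avoiding_def by (auto simp: top_rank_image_add)

lemma card_subsets_insert:
  assumes "finite B" "x \<notin> B"
  shows "card {U. U \<subseteq> insert x B \<and> P U}
    = card {U. U \<subseteq> B \<and> P U} + card {Y. Y \<subseteq> B \<and> P (insert x Y)}"
proof -
  have "{U. U \<subseteq> insert x B \<and> P U}
      = {U. U \<subseteq> B \<and> P U} \<union> insert x ` {Y. Y \<subseteq> B \<and> P (insert x Y)}"
  proof (intro set_eqI iffI)
    fix U assume U: "U \<in> {U. U \<subseteq> insert x B \<and> P U}"
    show "U \<in> {U. U \<subseteq> B \<and> P U} \<union> insert x ` {Y. Y \<subseteq> B \<and> P (insert x Y)}"
    proof (cases "x \<in> U")
      case True
      then have "U = insert x (U - {x})" "U - {x} \<subseteq> B" using U by auto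
      then show ?thesis using U by (auto intro!: image_eqI[where x="U - {x}"])
    qed (use U in auto)
  qed (use assms in auto)
  moreover have "inj_on (insert x) {Y. Y \<subseteq> B \<and> P (insert x Y)}"
    using assms(2) by (auto simp: inj_on_def)
  moreover have "{U. U \<subseteq> B \<and> P U} \<inter> insert x ` {Y. Y \<subseteq> B \<and> P (insert x Y)} = {}"
    using assms(2) by auto
  ultimately show ?thesis
    using assms(1) by (simp add: card_Un_disjoint card_image)
qed

lemma num_avoiding_interval_shift:
  "card {Y. Y \<subseteq> {b+1..b+n} \<and> card Y = m \<and> rank_avoiding d Y} = num_avoiding n m (d - int b)"
proof -
  let ?f = "\<lambda>v::nat. v + b"
  have "{Y. Y \<subseteq> {b+1..b+n} \<and> card Y = m \<and> rank_avoiding d Y}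
      = image ?f ` {U. U \<subseteq> {1..n} \<and> card U = m \<and> rank_avoiding (d - int b) U}"
  proof (rule set_eqI, rule iffI)
    fix Y assume Y: "Y \<in> {Y. Y \<subseteq> {b+1..b+n} \<and> card Y = m \<and> rank_avoiding d Y}"
    define U where "U = (\<lambda>v. v - b) ` Y"
    have YU: "Y = ?f ` U" unfolding U_def using Y by (force simp: image_image)
    moreover have "U \<subseteq> {1..n}" unfolding U_def using Y by force
    moreover have "card U = m" using Y YU by (simp add: card_image inj_on_def)
    moreover have "rank_avoiding (d - int b) U" using Y YU rank_avoiding_image_add by auto
    ultimately show "Y \<in> image ?f ` {U. U \<subseteq> {1..n} \<and> card U = m \<and> rank_avoiding (d - int b) U}"
      by blast
  qed (auto simp: card_image inj_on_def rank_avoiding_image_add)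
  moreover have "inj_on (image ?f) {U. U \<subseteq> {1..n} \<and> card U = m \<and> rank_avoiding (d - int b) U}"
    by (auto simp: inj_on_def inj_image_eq_iff)
  ultimately show ?thesis unfolding num_avoiding_def by (simp add: card_image)
qed

lemma num_avoiding_0: "num_avoiding n 0 d = 1"
proof -
  have "{U. U \<subseteq> {1..n} \<and> card U = 0 \<and> rank_avoiding d U} = {{}}"
    by (auto simp: rank_avoiding_def dest: finite_subset)
  then show ?thesis unfolding num_avoiding_def by simp
qed

lemma num_avoiding_Suc_max:
  "num_avoiding (Suc n) m d
    = num_avoiding n m d + (if m \<ge> 1 \<and> d \<noteq> int n then num_avoiding n (m - 1) (d + 1) else 0)"
proof -
  have ins: "{1..Suc n} = insert (Suc n) {1..n}" by auto
  have "num_avoiding (Suc n) m d = num_avoiding n m d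
      + card {Y. Y \<subseteq> {1..n} \<and> card (insert (Suc n) Y) = m \<and> rank_avoiding d (insert (Suc n) Y)}"
    unfolding num_avoiding_def ins by (rule card_subsets_insert) auto
  also have "{Y. Y \<subseteq> {1..n} \<and> card (insert (Suc n) Y) = m \<and> rank_avoiding d (insert (Suc n) Y)}
     = (if m \<ge> 1 \<and> d \<noteq> int n
        then {Y. Y \<subseteq> {1..n} \<and> card Y = m - 1 \<and> rank_avoiding (d + 1) Y} else {})"
  proof -
    have "card (insert (Suc n) Y) = m \<and> rank_avoiding d (insert (Suc n) Y) \<longleftrightarrow>
        m \<ge> 1 \<and> d \<noteq> int n \<and> card Y = m - 1 \<and> rank_avoiding (d + 1) Y"
      if Y: "Y \<subseteq> {1..n}" for Y
    proof -
      have fY: "finite Y" and lt: "\<forall>y\<in>Y. y < Suc n" using Y finite_subset by auto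
      then have "rank_avoiding d (insert (Suc n) Y) \<longleftrightarrow> d \<noteq> int n \<and> rank_avoiding (d + 1) Y"
        unfolding rank_avoiding_def using top_rank_insert_greater[OF fY lt] by auto
      moreover have "card (insert (Suc n) Y) = Suc (card Y)" using fY lt by (auto simp: card_insert_if)
      ultimately show ?thesis by auto
    qed
    then show ?thesis by auto
  qed
  finally show ?thesis unfolding num_avoiding_def by auto
qed

lemma num_avoiding_Suc_min:
  "num_avoiding (Suc n) m d = num_avoiding n m (d - 1)
    + (if m \<ge> 1 \<and> d + int m \<noteq> 1 then num_avoiding n (m - 1) (d - 1) else 0)"
proof -
  have ins: "{1..Suc n} = insert 1 {1+1..1+n}" by auto
  have "num_avoiding (Suc n) m d = card {U. U \<subseteq> {1+1..1+n} \<and> card U = m \<and> rank_avoiding d U}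
      + card {Y. Y \<subseteq> {1+1..1+n} \<and> card (insert 1 Y) = m \<and> rank_avoiding d (insert 1 Y)}"
    unfolding num_avoiding_def ins by (rule card_subsets_insert) auto
  also have "{Y. Y \<subseteq> {1+1..1+n} \<and> card (insert 1 Y) = m \<and> rank_avoiding d (insert 1 Y)}
     = (if m \<ge> 1 \<and> d + int m \<noteq> 1
        then {Y. Y \<subseteq> {1+1..1+n} \<and> card Y = m - 1 \<and> rank_avoiding d Y} else {})"
  proof -
    have "card (insert 1 Y) = m \<and> rank_avoiding d (insert 1 Y) \<longleftrightarrow>
        m \<ge> 1 \<and> d + int m \<noteq> 1 \<and> card Y = m - 1 \<and> rank_avoiding d Y"
      if Y: "Y \<subseteq> {1+1..1+n}" for Y
    proof -
      have fY: "finite Y" and gt: "\<forall>y\<in>Y. 1 < y" using Y finite_subset by auto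
      then have "rank_avoiding d (insert 1 Y) \<longleftrightarrow> d + int (Suc (card Y)) \<noteq> 1 \<and> rank_avoiding d Y"
        unfolding rank_avoiding_def using top_rank_insert_less[OF fY gt] by auto
      moreover have "card (insert 1 Y) = Suc (card Y)" using fY gt by (auto simp: card_insert_if)
      ultimately show ?thesis by auto
    qed
    then show ?thesis by auto
  qed
  finally show ?thesis using num_avoiding_interval_shift[of 1 n _ d] by simp
qed

lemma num_avoiding_offset_Suc:
  assumes "0 \<le> d" "int m + d + 1 \<le> int n"
  shows "num_avoiding n m (d + 1) = num_avoiding n m d"
  using assms
proof (induction m arbitrary: n d)
  case 0
  then show ?case by (simp add: num_avoiding_0)
next
  case (Suc m)
  then obtain n' where n: "n = Suc n'" by (cases n) auto
  have "num_avoiding n' m (d + 1) = num_avoiding n' m d" using Suc n by simp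
  moreover have "num_avoiding (Suc n') (Suc m) (d + 1) = num_avoiding n' (Suc m) d + num_avoiding n' m d"
    using num_avoiding_Suc_min[of n' "Suc m" "d + 1"] Suc.prems by simp
  moreover have "num_avoiding (Suc n') (Suc m) d = num_avoiding n' (Suc m) d + num_avoiding n' m (d + 1)"
    using num_avoiding_Suc_max[of n' "Suc m" d] Suc.prems n by simp
  ultimately show ?case using n by simp
qed

lemma num_avoiding_full: "num_avoiding n n 0 = (if even n then 1 else 0)"
proof -
  have "U \<subseteq> {1..n} \<and> card U = n \<longleftrightarrow> U = {1..n}" for U
    using card_subset_eq[of "{1..n}" U] by auto
  then have "{U. U \<subseteq> {1..n} \<and> card U = n \<and> rank_avoiding 0 U} = {U. U = {1..n} \<and> rank_avoiding 0 U}"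
    by blast
  also have "\<dots> = (if rank_avoiding 0 {1..n} then {{1..n}} else {})" by auto
  finally have card: "num_avoiding n n 0 = (if rank_avoiding 0 {1..n} then 1 else 0)"
    unfolding num_avoiding_def by simp
  have "top_rank {1..n} v = n + 1 - v" if "v \<in> {1..n}" for v
  proof -
    have "{u\<in>{1..n}. v \<le> u} = {v..n}" using that by auto
    then show ?thesis unfolding top_rank_def by simp
  qed
  then have "rank_avoiding 0 {1..n} \<longleftrightarrow> (\<forall>v\<in>{1..n}. n + 1 \<noteq> 2 * v)"
    unfolding rank_avoiding_def by auto
  also have "\<dots> \<longleftrightarrow> even n"
  proof
    assume "\<forall>v\<in>{1..n}. n + 1 \<noteq> 2 * v"
    moreover have "odd n \<Longrightarrow> Suc (n div 2) \<in> {1..n} \<and> n + 1 = 2 * Suc (n div 2)"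
      by auto presburger
    ultimately show "even n" by blast
  qed (auto elim!: evenE; presburger)
  finally show ?thesis using card by simp
qed

lemma num_avoiding_pascal:
  assumes "k < n"
  shows "num_avoiding (Suc n) (n - k) 0 = num_avoiding n (n - k) 0 + num_avoiding n (n - Suc k) 0"
proof -
  have "num_avoiding n (n - Suc k) (0 + 1) = num_avoiding n (n - Suc k) 0"
    by (rule num_avoiding_offset_Suc) (use assms in auto)
  moreover have "Suc 0 \<le> n - k" "n - k - 1 = n - Suc k" "0 < n" using assms by auto
  ultimately show ?thesis using num_avoiding_Suc_max[of n "n - k" 0] by simp
qed

lemma num_avoiding_pascal_offset:
  assumes "k < n"
  shows "num_avoiding (Suc n) (n - k) (int (Suc k))
    = num_avoiding n (n - k) (int k) + num_avoiding n (n - Suc k) (int (Suc k))"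
proof -
  have "num_avoiding n (n - Suc k) (int k + 1) = num_avoiding n (n - Suc k) (int k)"
    by (rule num_avoiding_offset_Suc) (use assms in auto)
  moreover have "Suc 0 \<le> n - k" "n - k - 1 = n - Suc k" "int k + 1 + int (n - k) \<noteq> 1"
    using assms by auto
  ultimately show ?thesis using num_avoiding_Suc_min[of n "n - k" "int k + 1"] by (simp add: add.commute)
qed

lemma num_avoiding_offset_complement:
  "k \<le> n \<Longrightarrow> num_avoiding n (n - k) (int k) = num_avoiding n (n - k) 0"
proof (induction n arbitrary: k)
  case (Suc n)
  show ?case
  proof (cases k)
    case (Suc k')
    show ?thesis
    proof (cases "k' = n")
      case False
      then have "k' < n" using Suc \<open>k \<le> Suc n\<close> by simp
      then show ?thesis
        using Suc.IH[of k'] Suc.IH[of "Suc k'"] Suc num_avoiding_pascal num_avoiding_pascal_offset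
        by simp
    qed (simp add: Suc num_avoiding_0)
  qed simp
qed simp

text \<open>This is psi(n,k); the value 0 for k > n makes Pascal's rule hold for all n and k.\<close>
definition avoid_count :: "nat \<Rightarrow> nat \<Rightarrow> int" where
  "avoid_count n k = (if k \<le> n then int (num_avoiding n (n - k) 0) else 0)"

lemma avoid_count_eq_0: "n < k \<Longrightarrow> avoid_count n k = 0"
  by (simp add: avoid_count_def)

lemma avoid_count_0: "avoid_count n 0 = (if even n then 1 else 0)"
  by (simp add: avoid_count_def num_avoiding_full)

lemma avoid_count_Suc_Suc: "avoid_count (Suc n) (Suc k) = avoid_count n k + avoid_count n (Suc k)"
  by (cases k n rule: linorder_cases) (simp_all add: avoid_count_def num_avoiding_pascal num_avoiding_0)

lemma sum_pascal_row_products: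
  fixes f :: "nat \<Rightarrow> nat \<Rightarrow> 'a::comm_ring"
  assumes pascal: "\<And>n k. f (Suc n) (Suc k) = f n k + f n (Suc k)" and "f a N = 0"
  shows "(\<Sum>k<Suc N. f (Suc a) k * f (Suc b) k) - (\<Sum>k<Suc N. f a k * f (Suc b) k)
       - (\<Sum>k<Suc N. f (Suc a) k * f b k)
       = (f (Suc a) 0 - f a 0) * (f (Suc b) 0 - f b 0)"
proof -
  let ?p = "f a" and ?q = "f b"
  have e1: "(\<Sum>k<Suc N. f (Suc a) k * f (Suc b) k)
      = f (Suc a) 0 * f (Suc b) 0 + (\<Sum>k<N. (?p k + ?p (Suc k)) * (?q k + ?q (Suc k)))"
    by (simp only: sum.lessThan_Suc_shift pascal)
  have e2: "(\<Sum>k<Suc N. f a k * f (Suc b) k)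
      = ?p 0 * f (Suc b) 0 + (\<Sum>k<N. ?p (Suc k) * (?q k + ?q (Suc k)))"
    by (simp only: sum.lessThan_Suc_shift pascal)
  have e3: "(\<Sum>k<Suc N. f (Suc a) k * f b k)
      = f (Suc a) 0 * ?q 0 + (\<Sum>k<N. (?p k + ?p (Suc k)) * ?q (Suc k))"
    by (simp only: sum.lessThan_Suc_shift pascal)
  have "(\<Sum>k<N. (?p k + ?p (Suc k)) * (?q k + ?q (Suc k)))
      - (\<Sum>k<N. ?p (Suc k) * (?q k + ?q (Suc k))) - (\<Sum>k<N. (?p k + ?p (Suc k)) * ?q (Suc k))
      = (\<Sum>k<N. ?p k * ?q k - ?p (Suc k) * ?q (Suc k))"
    by (simp add: sum_subtractf[symmetric] algebra_simps)
  also have "\<dots> = ?p 0 * ?q 0"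
    using sum_lessThan_telescope'[of "\<lambda>k. ?p k * ?q k" N] assms(2) by simp
  finally show ?thesis unfolding e1 e2 e3 by (simp add: algebra_simps)
qed

lemma top_rank_image_decr:
  assumes "finite X" "inj_on p X" "decr_on p X" "i \<in> X"
  shows "top_rank (p ` X) (p i) = card {j\<in>X. j \<le> i}"
proof -
  have "p i \<le> p j \<longleftrightarrow> j \<le> i" if "j \<in> X" for j
    using assms(3,4) that unfolding decr_on_def by (metis leD le_less linorder_le_less_linear)
  then have "{u\<in>p ` X. p i \<le> u} = p ` {j\<in>X. j \<le> i}" by auto
  moreover have "inj_on p {j\<in>X. j \<le> i}" using assms(2) by (rule inj_on_subset) auto
  ultimately show ?thesis unfolding top_rank_def by (simp add: card_image)
qed

lemma decr_on_iff_top_rank: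
  assumes "inj_on p {c+1..c+l}"
  shows "decr_on p {c+1..c+l} \<longleftrightarrow> (\<forall>i\<in>{c+1..c+l}. c + top_rank (p ` {c+1..c+l}) (p i) = i)"
proof
  assume "decr_on p {c+1..c+l}"
  moreover have "card {j\<in>{c+1..c+l}. j \<le> i} = i - c" if "i \<in> {c+1..c+l}" for i
  proof -
    have "{j\<in>{c+1..c+l}. j \<le> i} = {c+1..i}" using that by auto
    then show ?thesis by simp
  qed
  ultimately show "\<forall>i\<in>{c+1..c+l}. c + top_rank (p ` {c+1..c+l}) (p i) = i"
    using assms by (simp add: top_rank_image_decr)
next
  assume rank: "\<forall>i\<in>{c+1..c+l}. c + top_rank (p ` {c+1..c+l}) (p i) = i"
  show "decr_on p {c+1..c+l}" unfolding decr_on_def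
  proof (intro ballI impI)
    fix i j assume ij: "i \<in> {c+1..c+l}" "j \<in> {c+1..c+l}" "i < j"
    show "p j < p i"
    proof (rule ccontr)
      assume "\<not> p j < p i"
      then have "c + top_rank (p ` {c+1..c+l}) (p j) \<le> c + top_rank (p ` {c+1..c+l}) (p i)"
        by (simp add: top_rank_antimono)
      then show False using rank[rule_format, OF ij(1)] rank[rule_format, OF ij(2)] ij(3) by simp
    qed
  qed
qed

lemma rank_avoiding_iff_no_fixpoint:
  assumes "\<forall>i\<in>X. c + top_rank (p ` X) (p i) = i"
  shows "rank_avoiding (int c) (p ` X) \<longleftrightarrow> (\<forall>i\<in>X. p i \<noteq> i)"
proof -
  have "int c + int (top_rank (p ` X) (p i)) = int i" if "i \<in> X" for i
    using assms that by (metis of_nat_add)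
  then show ?thesis unfolding rank_avoiding_def by auto
qed

lemma permutes_of_bijections:
  assumes f: "bij_betw f S A" and g: "bij_betw g T B"
    and "S \<inter> T = {}" "A \<inter> B = {}" "S \<union> T = A \<union> B"
  obtains p where "p permutes A \<union> B" "p ` A = S" "p ` B = T"
    "\<forall>i\<in>A. f (p i) = i" "\<forall>i\<in>B. g (p i) = i"
proof
  define p where "p i = (if i \<in> A then the_inv_into S f i else if i \<in> B then the_inv_into T g i else i)" for i
  have pA: "bij_betw p A S"
    using bij_betw_the_inv_into[OF f] by (rule bij_betw_cong[THEN iffD1, rotated]) (simp add: p_def)
  have pB: "bij_betw p B T"
    using bij_betw_the_inv_into[OF g] by (rule bij_betw_cong[THEN iffD1, rotated])
      (use assms(4) in \<open>auto simp: p_def\<close>)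
  have "bij_betw p (A \<union> B) (A \<union> B)"
    using bij_betw_combine[OF pA pB assms(3)] assms(5) by simp
  then show "p permutes A \<union> B" by (rule bij_imp_permutes) (simp add: p_def)
  show "p ` A = S" "p ` B = T" using pA pB by (simp_all add: bij_betw_def)
  show "\<forall>i\<in>A. f (p i) = i" using f_the_inv_into_f_bij_betw[OF f] by (simp add: p_def)
  show "\<forall>i\<in>B. g (p i) = i"
    using f_the_inv_into_f_bij_betw[OF g] assms(4) by (auto simp: p_def)
qed

definition block_derangements :: "nat \<Rightarrow> nat \<Rightarrow> (nat \<Rightarrow> nat) set" where
  "block_derangements l1 l2 = {p. p permutes {1..l1+l2} \<and> decr_on p {1..l1}
      \<and> decr_on p {l1+1..l1+l2} \<and> (\<forall>i\<in>{1..l1+l2}. p i \<noteq> i)}"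

lemma Nblocks_two_blocks: "Nblocks l1 l2 0 0 = card (block_derangements l1 l2)"
  unfolding Nblocks_def block_derangements_def by (simp add: decr_on_def)

lemma block_derangements_iff:
  "p \<in> block_derangements l1 l2 \<longleftrightarrow> p permutes {1..l1+l2}
    \<and> (\<forall>i\<in>{1..l1}. top_rank (p ` {1..l1}) (p i) = i)
    \<and> (\<forall>i\<in>{l1+1..l1+l2}. l1 + top_rank (p ` {l1+1..l1+l2}) (p i) = i)
    \<and> rank_avoiding 0 (p ` {1..l1}) \<and> rank_avoiding (int l1) (p ` {l1+1..l1+l2})"
proof (cases "p permutes {1..l1+l2}")
  case True
  then have "inj p" by (rule permutes_inj)
  then have "decr_on p {1..l1} \<longleftrightarrow> (\<forall>i\<in>{1..l1}. top_rank (p ` {1..l1}) (p i) = i)"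
    and "decr_on p {l1+1..l1+l2} \<longleftrightarrow> (\<forall>i\<in>{l1+1..l1+l2}. l1 + top_rank (p ` {l1+1..l1+l2}) (p i) = i)"
    using decr_on_iff_top_rank[of p 0 l1] decr_on_iff_top_rank[of p l1 l2]
    by (simp_all add: inj_on_subset)
  moreover have "{1..l1+l2} = {1..l1} \<union> {l1+1..l1+l2}" by auto
  ultimately show ?thesis
    unfolding block_derangements_def
    using rank_avoiding_iff_no_fixpoint[of "{1..l1}" 0 p]
      rank_avoiding_iff_no_fixpoint[of "{l1+1..l1+l2}" l1 p] True
    by auto
qed (simp add: block_derangements_def)

definition avoiding_splits :: "nat \<Rightarrow> nat \<Rightarrow> nat set set" where
  "avoiding_splits l1 l2 = {S. S \<subseteq> {1..l1+l2} \<and> card S = l1 \<and> rank_avoiding 0 S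
      \<and> rank_avoiding (int l1) ({1..l1+l2} - S)}"

lemma permutes_image_upper_block:
  "(p :: nat \<Rightarrow> nat) permutes {1..l1+l2} \<Longrightarrow> p ` {l1+1..l1+l2} = {1..l1+l2} - p ` {1..l1}"
proof -
  assume perm: "p permutes {1..l1+l2}"
  have "{l1+1..l1+l2} = {1..l1+l2} - {1..l1}" by auto
  then show ?thesis by (metis image_set_diff[OF permutes_inj[OF perm]] permutes_image[OF perm])
qed

lemma image_block_derangement_mem:
  assumes p: "p \<in> block_derangements l1 l2"
  shows "p ` {1..l1} \<in> avoiding_splits l1 l2"
proof -
  have perm: "p permutes {1..l1+l2}" using p by (simp add: block_derangements_iff)
  have "p ` {1..l1} \<subseteq> {1..l1+l2}" using permutes_image[OF perm] by auto
  moreover have "card (p ` {1..l1}) = l1"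
    using permutes_inj[OF perm] by (simp add: card_image inj_on_subset)
  ultimately show ?thesis
    using p permutes_image_upper_block[OF perm]
    by (simp add: block_derangements_iff avoiding_splits_def)
qed

lemma avoiding_split_image_block_derangement:
  assumes S: "S \<in> avoiding_splits l1 l2"
  obtains p where "p \<in> block_derangements l1 l2" "p ` {1..l1} = S"
proof -
  let ?A = "{1..l1}" and ?B = "{l1+1..l1+l2}" and ?U = "{1..l1+l2}"
  define T where "T = ?U - S"
  have "S \<subseteq> ?U" "card S = l1" using S by (auto simp: avoiding_splits_def)
  then have fS: "finite S" and cT: "card T = l2"
    unfolding T_def by (auto simp: card_Diff_subset finite_subset)
  have "bij_betw ((+) l1) {1..card T} ?B" using cT by (simp add: add.commute)
  with bij_betw_top_rank have "bij_betw ((+) l1 \<circ> top_rank T) T ?B"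
    by (rule bij_betw_trans) (simp add: T_def)
  then have bT: "bij_betw (\<lambda>v. l1 + top_rank T v) T ?B" by (simp add: comp_def)
  have bS: "bij_betw (top_rank S) S ?A" using bij_betw_top_rank[OF fS] \<open>card S = l1\<close> by simp
  have U: "?U = ?A \<union> ?B" by auto
  have "S \<inter> T = {}" "?A \<inter> ?B = {}" "S \<union> T = ?A \<union> ?B"
    using \<open>S \<subseteq> ?U\<close> U by (auto simp: T_def)
  then obtain p where "p permutes ?A \<union> ?B" "p ` ?A = S" "p ` ?B = T"
    "\<forall>i\<in>?A. top_rank S (p i) = i" "\<forall>i\<in>?B. l1 + top_rank T (p i) = i"
    by (rule permutes_of_bijections[OF bS bT])
  then have "p \<in> block_derangements l1 l2"
    using S U by (auto simp: block_derangements_iff avoiding_splits_def T_def)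
  then show ?thesis using \<open>p ` ?A = S\<close> by (rule that)
qed

lemma inj_on_image_block_derangements:
  "inj_on (\<lambda>p. p ` {1..l1}) (block_derangements l1 l2)"
proof (rule inj_onI, rule ext)
  let ?A = "{1..l1}" and ?B = "{l1+1..l1+l2}" and ?U = "{1..l1+l2}"
  fix p q x
  assume p: "p \<in> block_derangements l1 l2" and q: "q \<in> block_derangements l1 l2"
    and A: "p ` ?A = q ` ?A"
  have perm: "p permutes ?U" "q permutes ?U" using p q by (simp_all add: block_derangements_iff)
  then have B: "p ` ?B = q ` ?B"
    using A permutes_image_upper_block[OF perm(1)] permutes_image_upper_block[OF perm(2)] by simp
  have "?U = ?A \<union> ?B" by auto
  then consider "x \<in> ?A" | "x \<in> ?B" | "x \<notin> ?U" by blast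
  then show "p x = q x"
  proof cases
    case 1
    then have "top_rank (p ` ?A) (p x) = x" "top_rank (p ` ?A) (q x) = x"
      using p q A by (auto simp: block_derangements_iff)
    then have "top_rank (p ` ?A) (p x) = top_rank (p ` ?A) (q x)" by simp
    moreover have "inj_on (top_rank (p ` ?A)) (p ` ?A)" by (simp add: inj_on_top_rank)
    ultimately show ?thesis using 1 A by (metis inj_onD imageI)
  next
    case 2
    then have "l1 + top_rank (p ` ?B) (p x) = x" "l1 + top_rank (p ` ?B) (q x) = x"
      using p q B by (auto simp: block_derangements_iff)
    then have "top_rank (p ` ?B) (p x) = top_rank (p ` ?B) (q x)" by simp
    moreover have "inj_on (top_rank (p ` ?B)) (p ` ?B)" by (simp add: inj_on_top_rank)
    ultimately show ?thesis using 2 B by (metis inj_onD imageI)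
  qed (use perm permutes_not_in in metis)
qed

lemma bij_betw_block_derangements_avoiding_splits:
  "bij_betw (\<lambda>p. p ` {1..l1}) (block_derangements l1 l2) (avoiding_splits l1 l2)"
  unfolding bij_betw_def
  using inj_on_image_block_derangements image_block_derangement_mem
    avoiding_split_image_block_derangement by blast

text \<open>A set S in avoiding_splits with k elements in the upper block {l1+1..l1+l2} is encoded
  by its lower part S \<inter> {1..l1} and by the gaps {l1+1..l1+l2} - S of the upper block.\<close>
definition low_parts :: "nat \<Rightarrow> nat \<Rightarrow> nat set set" where
  "low_parts l1 k = {X. X \<subseteq> {1..l1} \<and> card X + k = l1 \<and> rank_avoiding (int k) X}"

definition high_gaps :: "nat \<Rightarrow> nat \<Rightarrow> nat \<Rightarrow> nat set set" where
  "high_gaps l1 l2 k = {Y. Y \<subseteq> {l1+1..l1+l2} \<and> card Y + k = l2 \<and> rank_avoiding (int l1) Y}"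

lemma card_low_parts: "int (card (low_parts l1 k)) = avoid_count l1 k"
proof (cases "k \<le> l1")
  case True
  then have "low_parts l1 k = {X. X \<subseteq> {1..l1} \<and> card X = l1 - k \<and> rank_avoiding (int k) X}"
    unfolding low_parts_def by auto
  then show ?thesis
    using True num_avoiding_offset_complement by (simp add: avoid_count_def num_avoiding_def)
qed (auto simp: low_parts_def avoid_count_def)

lemma card_high_gaps: "int (card (high_gaps l1 l2 k)) = avoid_count l2 k"
proof (cases "k \<le> l2")
  case True
  then have "high_gaps l1 l2 k
      = {Y. Y \<subseteq> {l1+1..l1+l2} \<and> card Y = l2 - k \<and> rank_avoiding (int l1) Y}"
    unfolding high_gaps_def by auto
  then show ?thesis
    using True num_avoiding_interval_shift[of l1 l2 "l2 - k" "int l1"] by (simp add: avoid_count_def)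
qed (auto simp: high_gaps_def avoid_count_def)

lemma top_rank_split_low:
  assumes "S \<subseteq> {1..l1+l2}" "v \<le> l1"
  shows "top_rank S v = card (S \<inter> {l1+1..l1+l2}) + top_rank (S \<inter> {1..l1}) v"
proof -
  have "{u\<in>S. v \<le> u} = (S \<inter> {l1+1..l1+l2}) \<union> {u\<in>S \<inter> {1..l1}. v \<le> u}"
    using assms by auto
  moreover have "(S \<inter> {l1+1..l1+l2}) \<inter> {u\<in>S \<inter> {1..l1}. v \<le> u} = {}" by auto
  moreover have "finite S" using assms(1) finite_subset by blast
  ultimately show ?thesis unfolding top_rank_def by (simp add: card_Un_disjoint)
qed

lemma top_rank_split_high:
  assumes "S \<subseteq> {1..l1+l2}" "l1 < v"
  shows "top_rank S v = top_rank (S \<inter> {l1+1..l1+l2}) v"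
proof -
  have "{u\<in>S. v \<le> u} = {u\<in>S \<inter> {l1+1..l1+l2}. v \<le> u}" using assms by auto
  then show ?thesis unfolding top_rank_def by simp
qed

text \<open>Elements above l1 cannot violate the condition, since their top rank is at most card S = l1.\<close>
lemma rank_avoiding_0_iff_low:
  assumes "S \<subseteq> {1..l1+l2}" "card S = l1"
  shows "rank_avoiding 0 S \<longleftrightarrow> rank_avoiding (int (card (S \<inter> {l1+1..l1+l2}))) (S \<inter> {1..l1})"
proof -
  have fS: "finite S" using assms finite_subset by blast
  have "0 + int (top_rank S v) \<noteq> int v \<longleftrightarrow>
      int (card (S \<inter> {l1+1..l1+l2})) + int (top_rank (S \<inter> {1..l1}) v) \<noteq> int v"
    if "v \<in> S" "v \<le> l1" for v
    using top_rank_split_low[OF assms(1) that(2)] by simp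
  moreover have "0 + int (top_rank S v) \<noteq> int v" if "v \<in> S" "\<not> v \<le> l1" for v
    using top_rank_le_card[OF fS, of v] assms(2) that by simp
  moreover have "v \<in> S \<inter> {1..l1} \<longleftrightarrow> v \<in> S \<and> v \<le> l1" for v using assms(1) by auto
  ultimately show ?thesis unfolding rank_avoiding_def by metis
qed

lemma rank_avoiding_iff_high:
  assumes "T \<subseteq> {1..l1+l2}"
  shows "rank_avoiding (int l1) T \<longleftrightarrow> rank_avoiding (int l1) (T \<inter> {l1+1..l1+l2})"
proof -
  have fT: "finite T" using assms finite_subset by blast
  have "int l1 + int (top_rank T v) \<noteq> int v" if "v \<in> T" "v \<le> l1" for v
    using top_rank_pos[OF fT that(1)] that(2) by simp
  moreover have "top_rank T v = top_rank (T \<inter> {l1+1..l1+l2}) v" if "\<not> v \<le> l1" for v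
    using top_rank_split_high[OF assms] that by simp
  moreover have "v \<in> T \<inter> {l1+1..l1+l2} \<longleftrightarrow> v \<in> T \<and> \<not> v \<le> l1" for v using assms by auto
  ultimately show ?thesis unfolding rank_avoiding_def by metis
qed

lemma avoiding_split_parts:
  assumes "S \<in> avoiding_splits l1 l2"
  defines "k \<equiv> card (S \<inter> {l1+1..l1+l2})"
  shows "S \<inter> {1..l1} \<in> low_parts l1 k" "{l1+1..l1+l2} - S \<in> high_gaps l1 l2 k"
proof -
  let ?B = "{l1+1..l1+l2}"
  have S: "S \<subseteq> {1..l1+l2}" "card S = l1" "rank_avoiding 0 S"
    "rank_avoiding (int l1) ({1..l1+l2} - S)" using assms(1) by (auto simp: avoiding_splits_def)
  have "S = (S \<inter> {1..l1}) \<union> (S \<inter> ?B)" using S(1) by auto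
  also have "card \<dots> = card (S \<inter> {1..l1}) + k"
    unfolding k_def by (rule card_Un_disjoint) auto
  finally have "card S = card (S \<inter> {1..l1}) + k" .
  then show "S \<inter> {1..l1} \<in> low_parts l1 k"
    using S rank_avoiding_0_iff_low[OF S(1,2)] by (simp add: low_parts_def k_def)
  have "card (?B - S) + k = l2"
  proof -
    have "k \<le> card ?B" unfolding k_def by (rule card_mono) auto
    then show ?thesis unfolding k_def by (simp add: card_Diff_subset_Int Int_commute)
  qed
  moreover have "({1..l1+l2} - S) \<inter> ?B = ?B - S" by auto
  ultimately show "?B - S \<in> high_gaps l1 l2 k"
    using S(4) rank_avoiding_iff_high[of "{1..l1+l2} - S" l1 l2] by (simp add: high_gaps_def)
qed

lemma avoiding_split_of_parts:
  assumes "X \<in> low_parts l1 k" "Y \<in> high_gaps l1 l2 k"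
  shows "X \<union> ({l1+1..l1+l2} - Y) \<in> avoiding_splits l1 l2"
proof -
  let ?B = "{l1+1..l1+l2}" and ?S = "X \<union> ({l1+1..l1+l2} - Y)"
  have X: "X \<subseteq> {1..l1}" "card X + k = l1" "rank_avoiding (int k) X"
    using assms(1) by (auto simp: low_parts_def)
  have Y: "Y \<subseteq> ?B" "card Y + k = l2" "rank_avoiding (int l1) Y"
    using assms(2) by (auto simp: high_gaps_def)
  have S: "?S \<subseteq> {1..l1+l2}" using X by auto
  have "card (?B - Y) = k" using Y by (simp add: card_Diff_subset finite_subset)
  moreover have "card ?S = card X + card (?B - Y)"
    by (rule card_Un_disjoint) (use X finite_subset in auto)
  moreover have "?S \<inter> ?B = ?B - Y" "?S \<inter> {1..l1} = X" using X by auto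
  ultimately have "card ?S = l1" "rank_avoiding 0 ?S"
    using X rank_avoiding_0_iff_low[OF S] by simp_all
  moreover have "({1..l1+l2} - ?S) \<inter> ?B = Y" using X Y by fastforce
  ultimately show ?thesis
    using Y(3) rank_avoiding_iff_high[of "{1..l1+l2} - ?S" l1 l2] S by (simp add: avoiding_splits_def)
qed

lemma bij_betw_avoiding_splits_parts:
  assumes "l2 < N"
  shows "bij_betw (\<lambda>S. (S \<inter> {1..l1}, {l1+1..l1+l2} - S)) (avoiding_splits l1 l2)
           (\<Union>k<N. low_parts l1 k \<times> high_gaps l1 l2 k)"
proof -
  let ?B = "{l1+1..l1+l2}" and ?f = "\<lambda>S. (S \<inter> {1..l1}, {l1+1..l1+l2} - S)"
  have "inj_on ?f (avoiding_splits l1 l2)"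
  proof (rule inj_onI)
    fix S S' assume "S \<in> avoiding_splits l1 l2" "S' \<in> avoiding_splits l1 l2" "?f S = ?f S'"
    moreover have "S = (S \<inter> {1..l1}) \<union> (?B - (?B - S))" if "S \<in> avoiding_splits l1 l2" for S
      using that by (auto simp: avoiding_splits_def)
    ultimately show "S = S'" by (metis prod.inject)
  qed
  moreover have "?f S \<in> (\<Union>k<N. low_parts l1 k \<times> high_gaps l1 l2 k)"
    if S: "S \<in> avoiding_splits l1 l2" for S
  proof -
    have "card (S \<inter> ?B) \<le> l2" using card_mono[of ?B "S \<inter> ?B"] by auto
    then show ?thesis using avoiding_split_parts[OF S] assms by fastforce
  qed
  moreover have "P \<in> ?f ` avoiding_splits l1 l2"
    if "P \<in> (\<Union>k<N. low_parts l1 k \<times> high_gaps l1 l2 k)" for P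
  proof -
    from that obtain k where "P \<in> low_parts l1 k \<times> high_gaps l1 l2 k" by blast
    then obtain X Y where P: "P = (X, Y)" and X: "X \<in> low_parts l1 k" and Y: "Y \<in> high_gaps l1 l2 k"
      by (cases P) simp
    have "X \<subseteq> {1..l1}" "Y \<subseteq> ?B" using X Y by (simp_all add: low_parts_def high_gaps_def)
    then have "(X \<union> (?B - Y)) \<inter> {1..l1} = X" "?B - (X \<union> (?B - Y)) = Y"
      by (auto simp: subset_eq) (metis not_less_eq_eq)
    then show ?thesis
      using avoiding_split_of_parts[OF X Y] unfolding P by (intro image_eqI[where x = "X \<union> (?B - Y)"]) simp_all
  qed
  ultimately show ?thesis unfolding bij_betw_def by blast
qed

lemma card_avoiding_splits:
  assumes "l2 < N"
  shows "int (card (avoiding_splits l1 l2)) = (\<Sum>k<N. avoid_count l1 k * avoid_count l2 k)"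
proof -
  have "card (avoiding_splits l1 l2) = card (\<Union>k<N. low_parts l1 k \<times> high_gaps l1 l2 k)"
    by (rule bij_betw_same_card[OF bij_betw_avoiding_splits_parts[OF assms]])
  also have "\<dots> = (\<Sum>k<N. card (low_parts l1 k) * card (high_gaps l1 l2 k))"
    by (subst card_UN_disjoint) (auto simp: low_parts_def high_gaps_def card_cartesian_product)
  finally have "int (card (avoiding_splits l1 l2))
      = (\<Sum>k<N. int (card (low_parts l1 k)) * int (card (high_gaps l1 l2 k)))" by simp
  then show ?thesis by (simp add: card_low_parts card_high_gaps)
qed

lemma Nblocks_two_blocks_eq_sum:
  "l2 < N \<Longrightarrow> int (Nblocks l1 l2 0 0) = (\<Sum>k<N. avoid_count l1 k * avoid_count l2 k)"
  by (simp add: Nblocks_two_blocks card_avoiding_splits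
      bij_betw_same_card[OF bij_betw_block_derangements_avoiding_splits])

lemma G_0: "0 \<le> a1 \<Longrightarrow> 0 \<le> a2 \<Longrightarrow> G a1 a2 0 = int (Nblocks (nat a1) (nat a2) 0 0)"
proof -
  assume "0 \<le> a1" "0 \<le> a2"
  then have "{m::int. 0 \<le> a1 - m \<and> 0 \<le> a2 - (0 - m) \<and> 0 \<le> m \<and> 0 \<le> 0 - m} = {0}" by auto
  then show ?thesis unfolding G_def by simp
qed

theorem mainTheorem14:
  fixes a1 a2 :: int
  assumes "a1 \<ge> 1" and "a2 \<ge> 1"
  shows "G a1 a2 0 = G (a1 - 1) a2 0 + G a1 (a2 - 1) 0 + (-1) ^ nat (a1 + a2)"
proof -
  define a b where "a = nat (a1 - 1)" and "b = nat (a2 - 1)"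
  then have a: "nat a1 = Suc a" "nat (a1 - 1) = a" and b: "nat a2 = Suc b" "nat (a2 - 1) = b"
    using assms by auto
  define N where "N = Suc (a + b)"
  let ?S = "\<lambda>x y. \<Sum>k<Suc N. avoid_count x k * avoid_count y k"
  have N: "a < N" "b < Suc N" "Suc b < Suc N" unfolding N_def by simp_all
  have "G a1 a2 0 = ?S (Suc a) (Suc b)" "G (a1 - 1) a2 0 = ?S a (Suc b)"
    "G a1 (a2 - 1) 0 = ?S (Suc a) b"
    using assms a b
    by (simp_all add: G_0 Nblocks_two_blocks_eq_sum[OF N(3)] Nblocks_two_blocks_eq_sum[OF N(2)])
  moreover have "?S (Suc a) (Suc b) - ?S a (Suc b) - ?S (Suc a) b
      = (avoid_count (Suc a) 0 - avoid_count a 0) * (avoid_count (Suc b) 0 - avoid_count b 0)"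
    by (rule sum_pascal_row_products) (simp_all add: avoid_count_Suc_Suc avoid_count_eq_0 N(1))
  moreover have "avoid_count (Suc n) 0 - avoid_count n 0 = (-1) ^ Suc n" for n
    by (simp add: avoid_count_0)
  moreover have "nat (a1 + a2) = Suc a + Suc b" using assms a b by simp
  ultimately show ?thesis by (simp add: power_add)
qed

end
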